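(* For every $i\in\{1,2,3\}$ we have $e_i\bar\Lambda e_i=e_iZ(\bar\Lambda)e_i$.
   Context: Let $k$ be an algebraically closed field of characteristic $2$, let $n\geq 3$ and $c=2^{n-2}$. Let $Q$ be the quiver with vertices $1,2,3$ and arrows $\beta:1\to 2$, $\gamma:2\to 1$, $\delta:2\to 3$, $\eta:3\to 2$, $\kappa:1\to 3$, $\lambda:3\to 1$. Paths are written left to right: $xy$ means first $x$, then $y$; $e_i$ denotes (the image in $\bar\Lambda$ of) the trivial path at vertex $i$. Let $I\subseteq kQ$ be the ideal generated by $\beta\delta-\kappa\lambda\kappa$, $\eta\gamma-\lambda\kappa\lambda$, $\delta\lambda-\gamma\beta\gamma$, $\kappa\eta-\beta\gamma\beta$, $\lambda\beta-(\eta\delta)^{c-1}\eta$, $\gamma\kappa-(\delta\eta)^{c-1}\delta$, $\gamma\beta\delta$, $\delta\eta\gamma$, $\lambda\kappa\eta$. Put $\bar\Lambda=kQ/I$ (Erdmann's algebra $Q(3\mathcal{K})^c$). *)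

theory Defs
  imports "HOL-Computational_Algebra.Polynomial"
begin

datatype arrow = Beta | Gamma | Delta | Eta | Kappa | Lam

fun src :: "arrow \<Rightarrow> nat" where
  "src Beta = 1" | "src Gamma = 2" | "src Delta = 2"
| "src Eta = 3" | "src Kappa = 1" | "src Lam = 3"

fun tgt :: "arrow \<Rightarrow> nat" where
  "tgt Beta = 2" | "tgt Gamma = 1" | "tgt Delta = 3"
| "tgt Eta = 2" | "tgt Kappa = 3" | "tgt Lam = 1"

text \<open>A path is a pair (start vertex, list of arrows), arrows read left to right
  (first arrow first).  The trivial path at i is (i, []).\<close>

type_synonym path = "nat \<times> arrow list"

fun endv :: "nat \<Rightarrow> arrow list \<Rightarrow> nat" where
  "endv i [] = i"
| "endv i (a # as) = endv (tgt a) as"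

fun valid_path :: "nat \<Rightarrow> arrow list \<Rightarrow> bool" where
  "valid_path i [] = (i \<in> {1,2,3})"
| "valid_path i (a # as) = (src a = i \<and> valid_path (tgt a) as)"

type_synonym 'k kq = "path \<Rightarrow> 'k"

definition kQ :: "('k::field) kq set" where
  "kQ = {f. finite {p. f p \<noteq> 0} \<and> (\<forall>i xs. f (i, xs) \<noteq> 0 \<longrightarrow> valid_path i xs)}"

definition kq_add :: "('k::field) kq \<Rightarrow> 'k kq \<Rightarrow> 'k kq" (infixl "\<oplus>\<^sub>Q" 65) where
  "f \<oplus>\<^sub>Q g = (\<lambda>p. f p + g p)"

definition kq_diff :: "('k::field) kq \<Rightarrow> 'k kq \<Rightarrow> 'k kq" (infixl "\<ominus>\<^sub>Q" 65) where
  "f \<ominus>\<^sub>Q g = (\<lambda>p. f p - g p)"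

definition kq_zero :: "('k::field) kq" where
  "kq_zero = (\<lambda>p. 0)"

text \<open>Multiplication: concatenation of paths (zero if not composable),
  extended bilinearly.  A path (i,xs) factors as (i, take n xs)(endv i (take n xs), drop n xs).\<close>

definition kq_mult :: "('k::field) kq \<Rightarrow> 'k kq \<Rightarrow> 'k kq" (infixl "\<otimes>\<^sub>Q" 70) where
  "f \<otimes>\<^sub>Q g = (\<lambda>(i, xs). \<Sum>n\<in>{0..length xs}.
       f (i, take n xs) * g (endv i (take n xs), drop n xs))"

definition pathel :: "path \<Rightarrow> ('k::field) kq" where
  "pathel p = (\<lambda>q. if q = p then 1 else 0)"

definition idem :: "nat \<Rightarrow> ('k::field) kq" where
  "idem i = pathel (i, [])"

definition word :: "arrow list \<Rightarrow> ('k::field) kq" where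
  "word xs = pathel (src (hd xs), xs)"

inductive_set gen_ideal :: "('k::field) kq set \<Rightarrow> 'k kq set" for R where
  zero: "kq_zero \<in> gen_ideal R"
| gen: "r \<in> R \<Longrightarrow> a \<in> kQ \<Longrightarrow> b \<in> kQ \<Longrightarrow> a \<otimes>\<^sub>Q r \<otimes>\<^sub>Q b \<in> gen_ideal R"
| add: "x \<in> gen_ideal R \<Longrightarrow> y \<in> gen_ideal R \<Longrightarrow> x \<oplus>\<^sub>Q y \<in> gen_ideal R"

text \<open>The relations of Erdmann's algebra Q(3K)^c.\<close>

definition relations :: "nat \<Rightarrow> ('k::field) kq set" where
  "relations c = {
     word [Beta, Delta] \<ominus>\<^sub>Q word [Kappa, Lam, Kappa],
     word [Eta, Gamma] \<ominus>\<^sub>Q word [Lam, Kappa, Lam],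
     word [Delta, Lam] \<ominus>\<^sub>Q word [Gamma, Beta, Gamma],
     word [Kappa, Eta] \<ominus>\<^sub>Q word [Beta, Gamma, Beta],
     word [Lam, Beta] \<ominus>\<^sub>Q word (concat (replicate (c - 1) [Eta, Delta]) @ [Eta]),
     word [Gamma, Kappa] \<ominus>\<^sub>Q word (concat (replicate (c - 1) [Delta, Eta]) @ [Delta]),
     word [Gamma, Beta, Delta],
     word [Delta, Eta, Gamma],
     word [Lam, Kappa, Eta]}"

definition relI :: "nat \<Rightarrow> ('k::field) kq set" where
  "relI c = gen_ideal (relations c)"

definition central_mod :: "('k::field) kq set \<Rightarrow> 'k kq \<Rightarrow> bool" where
  "central_mod I z \<longleftrightarrow> z \<in> kQ \<and> (\<forall>y\<in>kQ. (z \<otimes>\<^sub>Q y) \<ominus>\<^sub>Q (y \<otimes>\<^sub>Q z) \<in> I)"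

text \<open>Preimages in kQ of e_i \<Lambda> e_i and e_i Z(\<Lambda>) e_i, where \<Lambda> = kQ/I.\<close>

definition corner_pre :: "('k::field) kq set \<Rightarrow> nat \<Rightarrow> 'k kq set" where
  "corner_pre I i = {x\<in>kQ. \<exists>a\<in>kQ. x \<ominus>\<^sub>Q (idem i \<otimes>\<^sub>Q a \<otimes>\<^sub>Q idem i) \<in> I}"

definition center_corner_pre :: "('k::field) kq set \<Rightarrow> nat \<Rightarrow> 'k kq set" where
  "center_corner_pre I i =
     {x\<in>kQ. \<exists>z. central_mod I z \<and> x \<ominus>\<^sub>Q (idem i \<otimes>\<^sub>Q z \<otimes>\<^sub>Q idem i) \<in> I}"

end

theory Submission
  imports Defs
begin

text \<open>Write \<Lambda> = kQ/I.  The sums of 2-cycles \<beta>\<gamma> + \<gamma>\<beta>, \<kappa>\<lambda> + \<lambda>\<kappa> and \<delta>\<eta> + \<eta>\<delta> are central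
  in \<Lambda>: commuting one of them past an arrow leaves paths of length three that lie in I.
  Hence every power of a 2-cycle at i lies in e_i Z(\<Lambda>) e_i, which is a subalgebra of
  e_i \<Lambda> e_i.  A closed path at i of length at least two either starts with a 2-cycle, or its
  first two arrows ab form the left side of one of the six binomial relations ab = (xy)^k x with
  xy a 2-cycle; either way the path is congruent modulo I to a power of a 2-cycle times a shorter
  closed path at i.  By induction all closed paths at i, and hence all of e_i \<Lambda> e_i, lie in
  e_i Z(\<Lambda>) e_i.\<close>

lemma src_in_vertices: "src a \<in> {1,2,3}"
  by (cases a) auto

lemma valid_path_vertex: "valid_path i xs \<Longrightarrow> i \<in> {1,2,3}"
  using src_in_vertices by (cases xs) auto

lemma endv_append [simp]: "endv i (xs @ ys) = endv (endv i xs) ys"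
  by (induction xs arbitrary: i) auto

lemma valid_path_append [simp]:
  "valid_path i (xs @ ys) \<longleftrightarrow> valid_path i xs \<and> valid_path (endv i xs) ys"
  by (induction xs arbitrary: i) (auto dest: valid_path_vertex)

lemma valid_path_endv: "valid_path i xs \<Longrightarrow> endv i xs \<in> {1,2,3}"
  by (induction xs arbitrary: i) auto

section \<open>The path algebra\<close>

definition kq_smult :: "'k::field \<Rightarrow> 'k kq \<Rightarrow> 'k kq" where
  "kq_smult a f = (\<lambda>p. a * f p)"

lemma kq_mult_apply:
  "(f \<otimes>\<^sub>Q g) (i, xs) = (\<Sum>n\<in>{0..length xs}. f (i, take n xs) * g (endv i (take n xs), drop n xs))"
  by (simp add: kq_mult_def)

lemma take_drop_eq_iff:
  "n \<le> length zs \<Longrightarrow> (take n zs = xs \<and> drop n zs = ys) \<longleftrightarrow> (n = length xs \<and> zs = xs @ ys)"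
  by (metis append_eq_conv_conj append_take_drop_id length_take min.absorb2)

lemma pathel_mult_pathel [simp]:
  "pathel (i, xs) \<otimes>\<^sub>Q pathel (j, ys) = (if endv i xs = j then pathel (i, xs @ ys) else kq_zero)"
proof (rule ext, clarify)
  fix k zs
  have "(pathel (i, xs) \<otimes>\<^sub>Q pathel (j, ys)) (k, zs) =
     (\<Sum>n\<in>{0..length zs}. if n = length xs then (if k = i \<and> zs = xs @ ys \<and> endv i xs = j then 1 else 0) else 0)"
    unfolding kq_mult_apply
  proof (rule sum.cong[OF refl])
    fix n assume n: "n \<in> {0..length zs}"
    show "pathel (i, xs) (k, take n zs) * pathel (j, ys) (endv k (take n zs), drop n zs) =
      (if n = length xs then (if k = i \<and> zs = xs @ ys \<and> endv i xs = j then 1 else 0) else 0)"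
    proof (cases "take n zs = xs \<and> drop n zs = ys")
      case True
      then have "n = length xs" "zs = xs @ ys" using take_drop_eq_iff[of n zs xs ys] n by auto
      then show ?thesis by (simp add: pathel_def)
    next
      case False
      then have "\<not> (n = length xs \<and> zs = xs @ ys)" using take_drop_eq_iff[of n zs xs ys] n by auto
      with False show ?thesis by (auto simp: pathel_def)
    qed
  qed
  also have "\<dots> = (if k = i \<and> zs = xs @ ys \<and> endv i xs = j then 1 else 0)"
    by (auto simp: sum.delta)
  finally show "(pathel (i, xs) \<otimes>\<^sub>Q pathel (j, ys)) (k, zs) =
     (if endv i xs = j then pathel (i, xs @ ys) else kq_zero) (k, zs)"
    by (auto simp: pathel_def kq_zero_def)
qed

lemma kq_mult_add_right: "f \<otimes>\<^sub>Q (g \<oplus>\<^sub>Q h) = (f \<otimes>\<^sub>Q g) \<oplus>\<^sub>Q (f \<otimes>\<^sub>Q h)"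
  by (rule ext, clarify) (simp add: kq_mult_apply kq_add_def distrib_left sum.distrib)

lemma kq_mult_add_left: "(g \<oplus>\<^sub>Q h) \<otimes>\<^sub>Q f = (g \<otimes>\<^sub>Q f) \<oplus>\<^sub>Q (h \<otimes>\<^sub>Q f)"
  by (rule ext, clarify) (simp add: kq_mult_apply kq_add_def distrib_right sum.distrib)

lemma kq_mult_diff_right: "f \<otimes>\<^sub>Q (g \<ominus>\<^sub>Q h) = (f \<otimes>\<^sub>Q g) \<ominus>\<^sub>Q (f \<otimes>\<^sub>Q h)"
  by (rule ext, clarify) (simp add: kq_mult_apply kq_diff_def right_diff_distrib sum_subtractf)

lemma kq_mult_diff_left: "(g \<ominus>\<^sub>Q h) \<otimes>\<^sub>Q f = (g \<otimes>\<^sub>Q f) \<ominus>\<^sub>Q (h \<otimes>\<^sub>Q f)"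
  by (rule ext, clarify) (simp add: kq_mult_apply kq_diff_def left_diff_distrib sum_subtractf)

lemma kq_mult_smult_right: "f \<otimes>\<^sub>Q kq_smult a g = kq_smult a (f \<otimes>\<^sub>Q g)"
  by (rule ext, clarify) (simp add: kq_mult_apply kq_smult_def sum_distrib_left ac_simps)

lemma kq_mult_smult_left: "kq_smult a g \<otimes>\<^sub>Q f = kq_smult a (g \<otimes>\<^sub>Q f)"
  by (rule ext, clarify) (simp add: kq_mult_apply kq_smult_def sum_distrib_left ac_simps)

lemma kq_mult_zero_right [simp]: "f \<otimes>\<^sub>Q kq_zero = kq_zero"
  by (rule ext, clarify) (simp add: kq_mult_apply kq_zero_def)

lemma kq_mult_zero_left [simp]: "kq_zero \<otimes>\<^sub>Q f = kq_zero"
  by (rule ext, clarify) (simp add: kq_mult_apply kq_zero_def)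

lemma kq_zero_simps [simp]:
  "kq_zero \<oplus>\<^sub>Q f = f" "f \<oplus>\<^sub>Q kq_zero = f" "f \<ominus>\<^sub>Q kq_zero = f" "f \<ominus>\<^sub>Q f = kq_zero"
  "kq_smult a kq_zero = kq_zero"
  by (auto simp: kq_add_def kq_diff_def kq_zero_def kq_smult_def)

lemma kq_mult_assoc: "(f \<otimes>\<^sub>Q g) \<otimes>\<^sub>Q h = f \<otimes>\<^sub>Q (g \<otimes>\<^sub>Q h)"
proof (rule ext, clarify)
  fix i :: nat and xs :: "arrow list"
  define L where "L = length xs"
  define F where "F = (\<lambda>m n. f (i, take m xs) * g (endv i (take m xs), drop m (take n xs)) *
      h (endv i (take n xs), drop n xs))"
  have inner: "(\<Sum>k\<in>{0..L - m}. F m (m + k)) = f (i, take m xs) * (g \<otimes>\<^sub>Q h) (endv i (take m xs), drop m xs)"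
    if m: "m \<in> {0..L}" for m
  proof -
    have "F m (m + k) = f (i, take m xs) * (g (endv i (take m xs), take k (drop m xs)) *
          h (endv (endv i (take m xs)) (take k (drop m xs)), drop k (drop m xs)))" for k
    proof -
      have "take (m + k) xs = take m xs @ take k (drop m xs)" by (simp add: take_add)
      then show ?thesis
        using m by (simp add: F_def L_def drop_take mult.assoc add.commute[of m k])
    qed
    then show ?thesis
      by (simp add: kq_mult_apply sum_distrib_left L_def)
  qed
  have "((f \<otimes>\<^sub>Q g) \<otimes>\<^sub>Q h) (i, xs) = (\<Sum>n\<in>{0..L}. \<Sum>m\<in>{0..n}. F m n)"
    unfolding kq_mult_apply F_def L_def
    by (auto simp: sum_distrib_right min_def intro!: sum.cong split: if_splits)
  also have "\<dots> = (\<Sum>(n,m)\<in>Sigma {0..L} (\<lambda>n. {0..n}). F m n)"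
    by (simp add: sum.Sigma)
  also have "\<dots> = (\<Sum>(m,k)\<in>Sigma {0..L} (\<lambda>m. {0..L-m}). F m (m+k))"
    by (rule sum.reindex_bij_witness[where j="\<lambda>(n,m). (m, n-m)" and i="\<lambda>(m,k). (m+k, m)"]) auto
  also have "\<dots> = (\<Sum>m\<in>{0..L}. \<Sum>k\<in>{0..L-m}. F m (m+k))"
    by (simp add: sum.Sigma)
  also have "\<dots> = (f \<otimes>\<^sub>Q (g \<otimes>\<^sub>Q h)) (i, xs)"
    using inner by (simp add: kq_mult_apply L_def)
  finally show "((f \<otimes>\<^sub>Q g) \<otimes>\<^sub>Q h) (i, xs) = (f \<otimes>\<^sub>Q (g \<otimes>\<^sub>Q h)) (i, xs)" .
qed

lemmas kq_mult_distribs = kq_mult_diff_left kq_mult_diff_right kq_mult_add_left kq_mult_add_right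
  kq_mult_smult_left kq_mult_smult_right kq_mult_assoc

lemma pathel_in_kQ: "valid_path i xs \<Longrightarrow> pathel (i, xs) \<in> kQ"
  by (auto simp: kQ_def pathel_def)

lemma kq_zero_in_kQ [simp]: "kq_zero \<in> kQ"
  by (simp add: kQ_def kq_zero_def)

lemma kq_add_in_kQ: "f \<in> kQ \<Longrightarrow> g \<in> kQ \<Longrightarrow> f \<oplus>\<^sub>Q g \<in> kQ"
proof -
  assume "f \<in> kQ" "g \<in> kQ"
  moreover have "{p. (f \<oplus>\<^sub>Q g) p \<noteq> 0} \<subseteq> {p. f p \<noteq> 0} \<union> {p. g p \<noteq> 0}"
    by (auto simp: kq_add_def)
  ultimately show ?thesis unfolding kQ_def by (auto simp: kq_add_def intro: finite_subset)
qed

lemma kq_smult_in_kQ: "f \<in> kQ \<Longrightarrow> kq_smult a f \<in> kQ"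
proof -
  assume "f \<in> kQ"
  moreover have "{p. kq_smult a f p \<noteq> 0} \<subseteq> {p. f p \<noteq> 0}"
    by (auto simp: kq_smult_def)
  ultimately show ?thesis unfolding kQ_def by (auto simp: kq_smult_def intro: finite_subset)
qed

lemma kq_mult_nonzero_factor:
  assumes "(f \<otimes>\<^sub>Q g) (i, zs) \<noteq> 0"
  shows "\<exists>n. f (i, take n zs) \<noteq> 0 \<and> g (endv i (take n zs), drop n zs) \<noteq> 0"
proof (rule ccontr)
  assume "\<not> ?thesis"
  then have "(f \<otimes>\<^sub>Q g) (i, zs) = 0"
    unfolding kq_mult_apply by (intro sum.neutral) auto
  with assms show False by simp
qed

lemma kq_mult_in_kQ: "f \<in> kQ \<Longrightarrow> g \<in> kQ \<Longrightarrow> f \<otimes>\<^sub>Q g \<in> kQ"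
proof -
  assume f: "f \<in> kQ" and g: "g \<in> kQ"
  let ?S = "(\<lambda>((i,xs),(j,ys)). (i, xs @ ys)) ` ({p. f p \<noteq> 0} \<times> {p. g p \<noteq> 0})"
  have sub: "{p. (f \<otimes>\<^sub>Q g) p \<noteq> 0} \<subseteq> ?S"
  proof clarify
    fix i zs assume "(f \<otimes>\<^sub>Q g) (i, zs) \<noteq> 0"
    then obtain n where "f (i, take n zs) \<noteq> 0" "g (endv i (take n zs), drop n zs) \<noteq> 0"
      using kq_mult_nonzero_factor by blast
    then have "((i, take n zs), (endv i (take n zs), drop n zs)) \<in> {p. f p \<noteq> 0} \<times> {p. g p \<noteq> 0}"
      by simp
    then show "(i, zs) \<in> ?S" by (rule rev_image_eqI) simp
  qed
  have fin: "finite ?S" using f g unfolding kQ_def by auto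
  have valid: "valid_path i zs" if nz: "(f \<otimes>\<^sub>Q g) (i, zs) \<noteq> 0" for i zs
  proof -
    obtain n where "f (i, take n zs) \<noteq> 0" "g (endv i (take n zs), drop n zs) \<noteq> 0"
      using kq_mult_nonzero_factor[OF nz] by blast
    then have "valid_path i (take n zs)" "valid_path (endv i (take n zs)) (drop n zs)"
      using f g unfolding kQ_def by auto
    then show ?thesis using valid_path_append[of i "take n zs" "drop n zs"] by simp
  qed
  show ?thesis unfolding kQ_def using finite_subset[OF sub fin] valid by auto
qed

lemma idem_in_kQ: "i \<in> {1,2,3} \<Longrightarrow> idem i \<in> kQ"
  unfolding idem_def by (rule pathel_in_kQ) simp

lemma idem_mult: "idem i \<otimes>\<^sub>Q f = (\<lambda>(k, xs). if k = i then f (k, xs) else 0)"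
proof (rule ext, clarify)
  fix k :: nat and xs :: "arrow list"
  have "(idem i \<otimes>\<^sub>Q f) (k, xs) = (\<Sum>n\<in>{0..length xs}. if n = 0 then (if k = i then f (k, xs) else 0) else 0)"
    unfolding kq_mult_apply idem_def by (rule sum.cong) (auto simp: pathel_def)
  then show "(idem i \<otimes>\<^sub>Q f) (k, xs) = (if k = i then f (k, xs) else 0)"
    by (simp add: sum.delta)
qed

lemma mult_idem: "f \<otimes>\<^sub>Q idem i = (\<lambda>(k, xs). if endv k xs = i then f (k, xs) else 0)"
proof (rule ext, clarify)
  fix k :: nat and xs :: "arrow list"
  have "(f \<otimes>\<^sub>Q idem i) (k, xs) =
      (\<Sum>n\<in>{0..length xs}. if n = length xs then (if endv k xs = i then f (k, xs) else 0) else 0)"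
    unfolding kq_mult_apply idem_def by (rule sum.cong) (auto simp: pathel_def)
  then show "(f \<otimes>\<^sub>Q idem i) (k, xs) = (if endv k xs = i then f (k, xs) else 0)"
    by (simp add: sum.delta)
qed

definition kq_one :: "'k::field kq" where
  "kq_one = idem 1 \<oplus>\<^sub>Q idem 2 \<oplus>\<^sub>Q idem 3"

lemma kq_one_in_kQ: "kq_one \<in> kQ"
  unfolding kq_one_def by (intro kq_add_in_kQ idem_in_kQ) auto

lemma kq_one_mult:
  assumes "y \<in> kQ" shows "kq_one \<otimes>\<^sub>Q y = y"
proof -
  have "y (i, xs) = 0" if "i \<notin> {1,2,3}" for i xs
    using assms that valid_path_vertex unfolding kQ_def by blast
  then show ?thesis unfolding kq_one_def
    by (simp only: kq_mult_add_left) (auto simp: idem_mult kq_add_def fun_eq_iff)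
qed

lemma mult_kq_one:
  assumes "y \<in> kQ" shows "y \<otimes>\<^sub>Q kq_one = y"
proof -
  have "y (i, xs) = 0" if "endv i xs \<notin> {1,2,3}" for i xs
    using assms that valid_path_endv unfolding kQ_def by blast
  then show ?thesis unfolding kq_one_def
    by (simp only: kq_mult_add_right) (auto simp: mult_idem kq_add_def fun_eq_iff)
qed

lemma kQ_induct [consumes 1, case_names zero step]:
  assumes "y \<in> kQ" and "P kq_zero"
    and step: "\<And>y a i xs. y \<in> kQ \<Longrightarrow> P y \<Longrightarrow> valid_path i xs \<Longrightarrow> P (y \<oplus>\<^sub>Q kq_smult a (pathel (i, xs)))"
  shows "P y"
proof -
  have "y \<in> kQ \<Longrightarrow> card {p. y p \<noteq> 0} = N \<Longrightarrow> P y" for N y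
  proof (induction N arbitrary: y)
    case 0
    then have "y = kq_zero" unfolding kQ_def by (auto simp: kq_zero_def)
    then show ?case using assms(2) by simp
  next
    case (Suc N)
    then have fin: "finite {p. y p \<noteq> 0}" unfolding kQ_def by auto
    from Suc.prems(2) obtain i xs where p: "y (i, xs) \<noteq> 0"
      by (metis (mono_tags) Collect_empty_eq card.empty nat.distinct(1) surj_pair)
    define y' where "y' = y((i, xs) := 0)"
    have val: "valid_path i xs" using Suc.prems(1) p unfolding kQ_def by auto
    have supp: "{q. y' q \<noteq> 0} = {q. y q \<noteq> 0} - {(i, xs)}" by (auto simp: y'_def)
    have y': "y' \<in> kQ" using Suc.prems(1) supp fin unfolding kQ_def by (auto simp: y'_def)
    moreover have "card {q. y' q \<noteq> 0} = N" using supp Suc.prems(2) fin p by simp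
    ultimately have "P (y' \<oplus>\<^sub>Q kq_smult (y (i, xs)) (pathel (i, xs)))"
      using Suc.IH step val by blast
    moreover have "y' \<oplus>\<^sub>Q kq_smult (y (i, xs)) (pathel (i, xs)) = y"
      by (auto simp: y'_def kq_add_def kq_smult_def pathel_def)
    ultimately show ?case by simp
  qed
  then show ?thesis using assms(1) by blast
qed

section \<open>Two-sided ideals and central elements\<close>

lemma gen_ideal_smult: "x \<in> gen_ideal R \<Longrightarrow> kq_smult a x \<in> gen_ideal R"
proof (induction rule: gen_ideal.induct)
  case zero
  then show ?case by (simp add: gen_ideal.zero)
next
  case (gen r b c)
  then show ?case
    by (metis gen_ideal.gen kq_mult_smult_left kq_smult_in_kQ)
next
  case (add x y)
  have "kq_smult a (x \<oplus>\<^sub>Q y) = kq_smult a x \<oplus>\<^sub>Q kq_smult a y"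
    by (auto simp: kq_smult_def kq_add_def distrib_left)
  then show ?case using add gen_ideal.add by metis
qed

lemma gen_ideal_diff: "x \<in> gen_ideal R \<Longrightarrow> y \<in> gen_ideal R \<Longrightarrow> x \<ominus>\<^sub>Q y \<in> gen_ideal R"
proof -
  assume "x \<in> gen_ideal R" "y \<in> gen_ideal R"
  moreover have "x \<ominus>\<^sub>Q y = x \<oplus>\<^sub>Q kq_smult (-1) y"
    by (auto simp: kq_diff_def kq_add_def kq_smult_def)
  ultimately show ?thesis using gen_ideal_smult gen_ideal.add by metis
qed

lemma gen_ideal_neg: "x \<in> gen_ideal R \<Longrightarrow> kq_zero \<ominus>\<^sub>Q x \<in> gen_ideal R"
  using gen_ideal_diff gen_ideal.zero by blast

lemma gen_ideal_mult_left: "x \<in> gen_ideal R \<Longrightarrow> y \<in> kQ \<Longrightarrow> y \<otimes>\<^sub>Q x \<in> gen_ideal R"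
proof (induction rule: gen_ideal.induct)
  case zero
  then show ?case by (simp add: gen_ideal.zero)
next
  case (gen r b c)
  then show ?case by (metis gen_ideal.gen kq_mult_assoc kq_mult_in_kQ)
next
  case (add x1 x2)
  then show ?case by (simp add: kq_mult_add_right gen_ideal.add)
qed

lemma gen_ideal_mult_right: "x \<in> gen_ideal R \<Longrightarrow> y \<in> kQ \<Longrightarrow> x \<otimes>\<^sub>Q y \<in> gen_ideal R"
proof (induction rule: gen_ideal.induct)
  case zero
  then show ?case by (simp add: gen_ideal.zero)
next
  case (gen r b c)
  then show ?case by (metis gen_ideal.gen kq_mult_assoc kq_mult_in_kQ)
next
  case (add x1 x2)
  then show ?case by (simp add: kq_mult_add_left gen_ideal.add)
qed

lemma gen_ideal_diff_trans:
  "x \<ominus>\<^sub>Q y \<in> gen_ideal R \<Longrightarrow> y \<ominus>\<^sub>Q z \<in> gen_ideal R \<Longrightarrow> x \<ominus>\<^sub>Q z \<in> gen_ideal R"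
proof -
  assume "x \<ominus>\<^sub>Q y \<in> gen_ideal R" "y \<ominus>\<^sub>Q z \<in> gen_ideal R"
  moreover have "x \<ominus>\<^sub>Q z = (x \<ominus>\<^sub>Q y) \<oplus>\<^sub>Q (y \<ominus>\<^sub>Q z)"
    by (auto simp: kq_diff_def kq_add_def)
  ultimately show ?thesis using gen_ideal.add by metis
qed

lemma gen_ideal_diff_zero: "x \<ominus>\<^sub>Q y \<in> gen_ideal R \<Longrightarrow> y \<in> gen_ideal R \<Longrightarrow> x \<in> gen_ideal R"
  using gen_ideal_diff_trans[of x y R kq_zero] by simp

lemma central_mod_add:
  assumes "central_mod (gen_ideal R) z" and "central_mod (gen_ideal R) z'"
  shows "central_mod (gen_ideal R) (z \<oplus>\<^sub>Q z')"
proof -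
  have "(z \<oplus>\<^sub>Q z') \<otimes>\<^sub>Q y \<ominus>\<^sub>Q y \<otimes>\<^sub>Q (z \<oplus>\<^sub>Q z') = (z \<otimes>\<^sub>Q y \<ominus>\<^sub>Q y \<otimes>\<^sub>Q z) \<oplus>\<^sub>Q (z' \<otimes>\<^sub>Q y \<ominus>\<^sub>Q y \<otimes>\<^sub>Q z')" for y
    by (simp only: kq_mult_distribs) (simp add: kq_add_def kq_diff_def fun_eq_iff algebra_simps)
  then have "(z \<oplus>\<^sub>Q z') \<otimes>\<^sub>Q y \<ominus>\<^sub>Q y \<otimes>\<^sub>Q (z \<oplus>\<^sub>Q z') \<in> gen_ideal R" if "y \<in> kQ" for y
    using assms that by (auto intro: gen_ideal.add simp: central_mod_def)
  then show ?thesis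
    using assms by (auto intro: kq_add_in_kQ simp: central_mod_def)
qed

lemma central_mod_smult:
  assumes "central_mod (gen_ideal R) z"
  shows "central_mod (gen_ideal R) (kq_smult a z)"
proof -
  have "kq_smult a z \<otimes>\<^sub>Q y \<ominus>\<^sub>Q y \<otimes>\<^sub>Q kq_smult a z = kq_smult a (z \<otimes>\<^sub>Q y \<ominus>\<^sub>Q y \<otimes>\<^sub>Q z)" for y
    by (simp only: kq_mult_distribs) (simp add: kq_smult_def kq_diff_def fun_eq_iff algebra_simps)
  then have "kq_smult a z \<otimes>\<^sub>Q y \<ominus>\<^sub>Q y \<otimes>\<^sub>Q kq_smult a z \<in> gen_ideal R" if "y \<in> kQ" for y
    using assms that by (auto intro: gen_ideal_smult simp: central_mod_def)
  then show ?thesis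
    using assms by (auto intro: kq_smult_in_kQ simp: central_mod_def)
qed

lemma central_mod_mult:
  assumes z: "central_mod (gen_ideal R) z" and z': "central_mod (gen_ideal R) z'"
  shows "central_mod (gen_ideal R) (z \<otimes>\<^sub>Q z')"
proof -
  have zk: "z \<in> kQ" "z' \<in> kQ" using z z' by (simp_all add: central_mod_def)
  have "(z \<otimes>\<^sub>Q z') \<otimes>\<^sub>Q y \<ominus>\<^sub>Q y \<otimes>\<^sub>Q (z \<otimes>\<^sub>Q z') \<in> gen_ideal R" if y: "y \<in> kQ" for y
  proof -
    have "(z \<otimes>\<^sub>Q z') \<otimes>\<^sub>Q y \<ominus>\<^sub>Q y \<otimes>\<^sub>Q (z \<otimes>\<^sub>Q z') =
        (z \<otimes>\<^sub>Q (z' \<otimes>\<^sub>Q y \<ominus>\<^sub>Q y \<otimes>\<^sub>Q z')) \<oplus>\<^sub>Q ((z \<otimes>\<^sub>Q y \<ominus>\<^sub>Q y \<otimes>\<^sub>Q z) \<otimes>\<^sub>Q z')"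
      by (simp only: kq_mult_distribs) (simp add: kq_add_def kq_diff_def fun_eq_iff algebra_simps)
    moreover have "z \<otimes>\<^sub>Q (z' \<otimes>\<^sub>Q y \<ominus>\<^sub>Q y \<otimes>\<^sub>Q z') \<in> gen_ideal R"
      using z' y zk by (intro gen_ideal_mult_left) (auto simp: central_mod_def)
    moreover have "(z \<otimes>\<^sub>Q y \<ominus>\<^sub>Q y \<otimes>\<^sub>Q z) \<otimes>\<^sub>Q z' \<in> gen_ideal R"
      using z y zk by (intro gen_ideal_mult_right) (auto simp: central_mod_def)
    ultimately show ?thesis using gen_ideal.add by metis
  qed
  then show ?thesis unfolding central_mod_def using zk kq_mult_in_kQ by blast
qed

lemma central_mod_kq_one: "central_mod (gen_ideal R) kq_one"
  by (simp add: central_mod_def kq_one_in_kQ kq_one_mult mult_kq_one gen_ideal.zero)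

lemma central_mod_if_commutes_with_generators:
  assumes z: "z \<in> kQ"
    and idem: "\<And>j. j \<in> {1,2,3} \<Longrightarrow> z \<otimes>\<^sub>Q idem j \<ominus>\<^sub>Q idem j \<otimes>\<^sub>Q z \<in> gen_ideal R"
    and arrow: "\<And>a. z \<otimes>\<^sub>Q pathel (src a, [a]) \<ominus>\<^sub>Q pathel (src a, [a]) \<otimes>\<^sub>Q z \<in> gen_ideal R"
  shows "central_mod (gen_ideal R) z"
proof -
  have path: "z \<otimes>\<^sub>Q pathel (i, xs) \<ominus>\<^sub>Q pathel (i, xs) \<otimes>\<^sub>Q z \<in> gen_ideal R" if "valid_path i xs" for i xs
    using that
  proof (induction xs arbitrary: i)
    case Nil
    then show ?case using idem[of i] by (simp add: idem_def)
  next
    case (Cons a as)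
    then have i: "i = src a" and as: "valid_path (tgt a) as" by auto
    let ?a = "pathel (src a, [a])" and ?as = "pathel (tgt a, as)"
    have split: "pathel (i, a # as) = ?a \<otimes>\<^sub>Q ?as"
      using i by simp
    have "z \<otimes>\<^sub>Q pathel (i, a # as) \<ominus>\<^sub>Q pathel (i, a # as) \<otimes>\<^sub>Q z =
      ((z \<otimes>\<^sub>Q ?a \<ominus>\<^sub>Q ?a \<otimes>\<^sub>Q z) \<otimes>\<^sub>Q ?as) \<oplus>\<^sub>Q (?a \<otimes>\<^sub>Q (z \<otimes>\<^sub>Q ?as \<ominus>\<^sub>Q ?as \<otimes>\<^sub>Q z))"
      unfolding split by (simp only: kq_mult_distribs) (simp add: kq_add_def kq_diff_def fun_eq_iff algebra_simps)
    moreover have "?as \<in> kQ" "?a \<in> kQ"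
      using as valid_path_vertex[OF as] by (auto intro: pathel_in_kQ)
    ultimately show ?case
      using Cons.IH[OF as] arrow[of a] gen_ideal.add gen_ideal_mult_left gen_ideal_mult_right by metis
  qed
  have "z \<otimes>\<^sub>Q y \<ominus>\<^sub>Q y \<otimes>\<^sub>Q z \<in> gen_ideal R" if "y \<in> kQ" for y
    using that
  proof (induction rule: kQ_induct)
    case zero
    then show ?case by (simp add: gen_ideal.zero)
  next
    case (step y a i xs)
    have "z \<otimes>\<^sub>Q (y \<oplus>\<^sub>Q kq_smult a (pathel (i, xs))) \<ominus>\<^sub>Q (y \<oplus>\<^sub>Q kq_smult a (pathel (i, xs))) \<otimes>\<^sub>Q z =
       (z \<otimes>\<^sub>Q y \<ominus>\<^sub>Q y \<otimes>\<^sub>Q z) \<oplus>\<^sub>Q kq_smult a (z \<otimes>\<^sub>Q pathel (i, xs) \<ominus>\<^sub>Q pathel (i, xs) \<otimes>\<^sub>Q z)"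
      by (simp only: kq_mult_distribs) (simp add: kq_add_def kq_diff_def kq_smult_def fun_eq_iff algebra_simps)
    then show ?case using step path gen_ideal_smult gen_ideal.add by metis
  qed
  then show ?thesis unfolding central_mod_def using z by blast
qed

section \<open>The corner of the centre\<close>

lemma center_corner_pre_zero: "kq_zero \<in> center_corner_pre (gen_ideal R) i"
  unfolding center_corner_pre_def
  by (auto simp: gen_ideal.zero central_mod_def gen_ideal_neg intro!: exI[of _ kq_zero])

lemma center_corner_pre_sandwich:
  assumes "central_mod (gen_ideal R) z" and "i \<in> {1,2,3}"
  shows "idem i \<otimes>\<^sub>Q z \<otimes>\<^sub>Q idem i \<in> center_corner_pre (gen_ideal R) i"
  using assms unfolding center_corner_pre_def
  by (auto intro!: kq_mult_in_kQ idem_in_kQ simp: central_mod_def gen_ideal.zero)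

lemma center_corner_pre_idem: "i \<in> {1,2,3} \<Longrightarrow> idem i \<in> center_corner_pre (gen_ideal R) i"
  using center_corner_pre_sandwich[OF central_mod_kq_one]
  by (simp add: mult_kq_one idem_in_kQ) (simp add: idem_def)

lemma center_corner_pre_cong:
  "u \<in> center_corner_pre (gen_ideal R) i \<Longrightarrow> v \<ominus>\<^sub>Q u \<in> gen_ideal R \<Longrightarrow> v \<in> kQ
    \<Longrightarrow> v \<in> center_corner_pre (gen_ideal R) i"
  unfolding center_corner_pre_def using gen_ideal_diff_trans by blast

lemma center_corner_pre_add:
  assumes "u \<in> center_corner_pre (gen_ideal R) i" and "v \<in> center_corner_pre (gen_ideal R) i"
  shows "u \<oplus>\<^sub>Q v \<in> center_corner_pre (gen_ideal R) i"
proof -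
  obtain z z' where u: "u \<in> kQ" "central_mod (gen_ideal R) z" "u \<ominus>\<^sub>Q (idem i \<otimes>\<^sub>Q z \<otimes>\<^sub>Q idem i) \<in> gen_ideal R"
    and v: "v \<in> kQ" "central_mod (gen_ideal R) z'" "v \<ominus>\<^sub>Q (idem i \<otimes>\<^sub>Q z' \<otimes>\<^sub>Q idem i) \<in> gen_ideal R"
    using assms unfolding center_corner_pre_def by blast
  have "(u \<oplus>\<^sub>Q v) \<ominus>\<^sub>Q (idem i \<otimes>\<^sub>Q (z \<oplus>\<^sub>Q z') \<otimes>\<^sub>Q idem i) =
     (u \<ominus>\<^sub>Q (idem i \<otimes>\<^sub>Q z \<otimes>\<^sub>Q idem i)) \<oplus>\<^sub>Q (v \<ominus>\<^sub>Q (idem i \<otimes>\<^sub>Q z' \<otimes>\<^sub>Q idem i))"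
    by (simp only: kq_mult_distribs) (simp add: kq_add_def kq_diff_def fun_eq_iff algebra_simps)
  then have "(u \<oplus>\<^sub>Q v) \<ominus>\<^sub>Q (idem i \<otimes>\<^sub>Q (z \<oplus>\<^sub>Q z') \<otimes>\<^sub>Q idem i) \<in> gen_ideal R"
    using gen_ideal.add[OF u(3) v(3)] by simp
  then show ?thesis unfolding center_corner_pre_def
    using kq_add_in_kQ[OF u(1) v(1)] central_mod_add[OF u(2) v(2)] by blast
qed

lemma center_corner_pre_smult:
  assumes "u \<in> center_corner_pre (gen_ideal R) i"
  shows "kq_smult a u \<in> center_corner_pre (gen_ideal R) i"
proof -
  obtain z where u: "u \<in> kQ" "central_mod (gen_ideal R) z" "u \<ominus>\<^sub>Q (idem i \<otimes>\<^sub>Q z \<otimes>\<^sub>Q idem i) \<in> gen_ideal R"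
    using assms unfolding center_corner_pre_def by blast
  have "kq_smult a u \<ominus>\<^sub>Q (idem i \<otimes>\<^sub>Q kq_smult a z \<otimes>\<^sub>Q idem i) =
     kq_smult a (u \<ominus>\<^sub>Q (idem i \<otimes>\<^sub>Q z \<otimes>\<^sub>Q idem i))"
    by (simp only: kq_mult_distribs) (simp add: kq_smult_def kq_diff_def fun_eq_iff algebra_simps)
  then have "kq_smult a u \<ominus>\<^sub>Q (idem i \<otimes>\<^sub>Q kq_smult a z \<otimes>\<^sub>Q idem i) \<in> gen_ideal R"
    using gen_ideal_smult[OF u(3)] by simp
  then show ?thesis unfolding center_corner_pre_def
    using kq_smult_in_kQ[OF u(1)] central_mod_smult[OF u(2)] by blast
qed

text \<open>Modulo the ideal, e_i z e_i \<cdot> e_i z' e_i = e_i z z' e_i because z' commutes with e_i.\<close>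

lemma center_corner_pre_mult:
  assumes i: "i \<in> {1,2,3}"
    and "u \<in> center_corner_pre (gen_ideal R) i" and "v \<in> center_corner_pre (gen_ideal R) i"
  shows "u \<otimes>\<^sub>Q v \<in> center_corner_pre (gen_ideal R) i"
proof -
  obtain z z' where u: "u \<in> kQ" "central_mod (gen_ideal R) z" "u \<ominus>\<^sub>Q (idem i \<otimes>\<^sub>Q z \<otimes>\<^sub>Q idem i) \<in> gen_ideal R"
    and v: "v \<in> kQ" "central_mod (gen_ideal R) z'" "v \<ominus>\<^sub>Q (idem i \<otimes>\<^sub>Q z' \<otimes>\<^sub>Q idem i) \<in> gen_ideal R"
    using assms unfolding center_corner_pre_def by blast
  let ?e = "idem i"
  have e: "?e \<in> kQ" using i by (rule idem_in_kQ)
  have ee: "?e \<otimes>\<^sub>Q ?e = ?e" "?e \<otimes>\<^sub>Q (?e \<otimes>\<^sub>Q f) = ?e \<otimes>\<^sub>Q f" for f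
    by (simp_all add: kq_mult_assoc[symmetric] idem_def)
  have zk: "z \<in> kQ" "z' \<in> kQ" using u v unfolding central_mod_def by auto
  have "u \<otimes>\<^sub>Q v \<ominus>\<^sub>Q (?e \<otimes>\<^sub>Q (z \<otimes>\<^sub>Q z') \<otimes>\<^sub>Q ?e) =
    ((u \<ominus>\<^sub>Q (?e \<otimes>\<^sub>Q z \<otimes>\<^sub>Q ?e)) \<otimes>\<^sub>Q v \<oplus>\<^sub>Q (?e \<otimes>\<^sub>Q z \<otimes>\<^sub>Q ?e) \<otimes>\<^sub>Q (v \<ominus>\<^sub>Q (?e \<otimes>\<^sub>Q z' \<otimes>\<^sub>Q ?e)))
     \<oplus>\<^sub>Q ((?e \<otimes>\<^sub>Q z) \<otimes>\<^sub>Q ((kq_zero \<ominus>\<^sub>Q (z' \<otimes>\<^sub>Q ?e \<ominus>\<^sub>Q ?e \<otimes>\<^sub>Q z')) \<otimes>\<^sub>Q ?e))"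
    by (simp only: kq_mult_distribs ee kq_mult_zero_left kq_mult_zero_right)
      (simp add: kq_add_def kq_diff_def kq_zero_def fun_eq_iff algebra_simps)
  moreover have "z' \<otimes>\<^sub>Q ?e \<ominus>\<^sub>Q ?e \<otimes>\<^sub>Q z' \<in> gen_ideal R"
    using v(2) e unfolding central_mod_def by blast
  ultimately have "u \<otimes>\<^sub>Q v \<ominus>\<^sub>Q (?e \<otimes>\<^sub>Q (z \<otimes>\<^sub>Q z') \<otimes>\<^sub>Q ?e) \<in> gen_ideal R"
    by (simp only:) (intro gen_ideal.add gen_ideal_mult_right gen_ideal_mult_left gen_ideal_neg
        u(3) v(3) v(1) e kq_mult_in_kQ zk)
  then show ?thesis unfolding center_corner_pre_def
    using central_mod_mult[OF u(2) v(2)] kq_mult_in_kQ[OF u(1) v(1)] by blast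
qed

lemma center_corner_pre_append:
  assumes "pathel (i, p) \<in> center_corner_pre (gen_ideal R) i"
    and "pathel (i, q) \<in> center_corner_pre (gen_ideal R) i"
    and "endv i p = i" and "i \<in> {1,2,3}"
  shows "pathel (i, p @ q) \<in> center_corner_pre (gen_ideal R) i"
  using center_corner_pre_mult[OF assms(4,1,2)] assms(3) by simp

section \<open>The defining relations\<close>

definition wpow :: "arrow list \<Rightarrow> nat \<Rightarrow> arrow list" where
  "wpow w k = concat (replicate k w)"

lemma wpow_0 [simp]: "wpow w 0 = []"
  by (simp add: wpow_def)

lemma wpow_1 [simp]: "wpow w 1 = w"
  by (simp add: wpow_def)

lemma wpow_Suc: "wpow w (Suc k) = w @ wpow w k"
  by (simp add: wpow_def)

lemma wpow_Suc_right: "wpow w (Suc k) = wpow w k @ w"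
  by (simp add: wpow_def replicate_append_same[symmetric])

lemma endv_wpow [simp]: "endv i w = i \<Longrightarrow> endv i (wpow w k) = i"
  by (induction k) (simp_all add: wpow_Suc)

lemma valid_path_wpow [simp]: "valid_path i w \<Longrightarrow> endv i w = i \<Longrightarrow> valid_path i (wpow w k)"
  by (induction k) (auto simp: wpow_Suc dest: valid_path_vertex)

lemma hd_wpow_append [simp]: "hd (wpow (x # w) k @ [x]) = x"
  by (cases k) (simp_all add: wpow_Suc)

definition two_cycles :: "(arrow \<times> arrow) set" where
  "two_cycles = {(Beta, Gamma), (Gamma, Beta), (Kappa, Lam), (Lam, Kappa), (Delta, Eta), (Eta, Delta)}"

lemma two_cycle_closed:
  "(x, y) \<in> two_cycles \<Longrightarrow> valid_path (src x) [x, y] \<and> endv (src x) [x, y] = src x"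
  by (auto simp: two_cycles_def)

text \<open>A tuple (a, b, x, y, k) stands for the defining relation ab = (xy)^k x.\<close>

definition binomial_rules :: "nat \<Rightarrow> (arrow \<times> arrow \<times> arrow \<times> arrow \<times> nat) set" where
  "binomial_rules c = {(Beta, Delta, Kappa, Lam, 1), (Eta, Gamma, Lam, Kappa, 1),
     (Delta, Lam, Gamma, Beta, 1), (Kappa, Eta, Beta, Gamma, 1),
     (Lam, Beta, Eta, Delta, c - 1), (Gamma, Kappa, Delta, Eta, c - 1)}"

lemma binomial_rule_shape:
  "(a, b, x, y, k) \<in> binomial_rules c \<Longrightarrow> (x, y) \<in> two_cycles \<and> src x = src a \<and> tgt x = tgt b"
  by (auto simp: binomial_rules_def two_cycles_def)

lemma binomial_rule_exists:
  "valid_path i (a # b # rest) \<Longrightarrow> (a, b) \<notin> two_cycles \<Longrightarrow> \<exists>x y k. (a, b, x, y, k) \<in> binomial_rules c"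
  by (cases a; cases b) (auto simp: binomial_rules_def two_cycles_def)

lemma gen_ideal_sandwich:
  assumes "r \<in> R" and "valid_path i us" and "valid_path j ws"
  shows "pathel (i, us) \<otimes>\<^sub>Q r \<otimes>\<^sub>Q pathel (j, ws) \<in> gen_ideal R"
  using assms by (intro gen_ideal.gen pathel_in_kQ)

lemma relI_binomial:
  assumes rule: "(a, b, x, y, k) \<in> binomial_rules c" and valid: "valid_path i (us @ a # b # ws)"
  shows "pathel (i, us @ a # b # ws) \<ominus>\<^sub>Q pathel (i, us @ wpow [x, y] k @ x # ws) \<in> (relI c :: 'k::field kq set)"
proof -
  have shape: "(x, y) \<in> two_cycles" "src x = src a" "tgt x = tgt b"
    using binomial_rule_shape[OF rule] by auto
  have "word [a, b] \<ominus>\<^sub>Q word (wpow [x, y] k @ [x]) \<in> relations c"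
    using rule by (auto simp: binomial_rules_def relations_def wpow_def)
  then have "pathel (i, us) \<otimes>\<^sub>Q (word [a, b] \<ominus>\<^sub>Q word (wpow [x, y] k @ [x])) \<otimes>\<^sub>Q pathel (tgt b, ws)
      \<in> relI c"
    using valid unfolding relI_def by (intro gen_ideal_sandwich) auto
  moreover have "endv (src x) (wpow [x, y] k) = src x"
    using two_cycle_closed[OF shape(1)] by simp
  ultimately show ?thesis
    using valid shape by (simp add: kq_mult_diff_left kq_mult_diff_right word_def)
qed

lemma relI_binomial_zero:
  assumes "(a, b, x, y, k) \<in> binomial_rules c" and "valid_path i (us @ a # b # ws)"
    and "pathel (i, us @ wpow [x, y] k @ x # ws) \<in> (relI c :: 'k::field kq set)"
  shows "pathel (i, us @ a # b # ws) \<in> (relI c :: 'k kq set)"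
  using relI_binomial[OF assms(1,2), where 'k = 'k] assms(3) unfolding relI_def by (rule gen_ideal_diff_zero)

lemma relI_monomial:
  assumes "w \<in> {[Gamma, Beta, Delta], [Delta, Eta, Gamma], [Lam, Kappa, Eta]}"
    and "valid_path i (us @ w @ ws)"
  shows "pathel (i, us @ w @ ws) \<in> (relI c :: 'k::field kq set)"
proof -
  have "pathel (i, us) \<otimes>\<^sub>Q word w \<otimes>\<^sub>Q pathel (endv (src (hd w)) w, ws) \<in> relI c"
    using assms unfolding relI_def by (intro gen_ideal_sandwich) (auto simp: relations_def)
  then show ?thesis
    using assms by (auto simp: word_def)
qed

text \<open>The non-zero terms of the commutators of the arrows with \<beta>\<gamma> + \<gamma>\<beta>, \<kappa>\<lambda> + \<lambda>\<kappa> and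
  \<delta>\<eta> + \<eta>\<delta>.  Several of them lie in I only because c \<ge> 2, which makes (\<eta>\<delta>)^(c-1) \<eta> and
  (\<delta>\<eta>)^(c-1) \<delta> begin with a 2-cycle.\<close>

definition commutator_paths :: "path set" where
  "commutator_paths = {(2, [Gamma, Beta, Delta]), (3, [Eta, Gamma, Beta]), (1, [Beta, Gamma, Kappa]),
     (3, [Lam, Beta, Gamma]), (1, [Kappa, Lam, Beta]), (2, [Gamma, Kappa, Lam]),
     (2, [Delta, Lam, Kappa]), (3, [Lam, Kappa, Eta]), (1, [Beta, Delta, Eta]),
     (2, [Delta, Eta, Gamma]), (1, [Kappa, Eta, Delta]), (3, [Eta, Delta, Lam])}"

lemma commutator_path_in_relI:
  assumes "2 \<le> c" and "p \<in> commutator_paths"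
  shows "pathel p \<in> (relI c :: 'k::field kq set)"
proof -
  define m where "m = c - 2"
  have m: "c - Suc 0 = Suc m" using assms by (simp add: m_def)
  note rules = binomial_rules_def m wpow_Suc
  note monomial = relI_monomial[where 'k = 'k]
  note binomial = relI_binomial_zero[where 'k = 'k]
  have "pathel (2, [Gamma, Beta, Delta]) \<in> (relI c :: 'k kq set)"
    using monomial[of "[Gamma, Beta, Delta]" 2 "[]" "[]" c] by simp
  moreover have "pathel (3, [Eta, Gamma, Beta]) \<in> (relI c :: 'k kq set)"
    using monomial[of "[Lam, Kappa, Eta]" 3 "[]" "Delta # wpow [Eta, Delta] m @ [Eta]" c]
      binomial[of Lam Beta Eta Delta "c - 1" c 3 "[Lam, Kappa]" "[]"]
      binomial[of Eta Gamma Lam Kappa 1 c 3 "[]" "[Beta]"]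
    by (simp add: rules)
  moreover have "pathel (1, [Beta, Gamma, Kappa]) \<in> (relI c :: 'k kq set)"
    using monomial[of "[Lam, Kappa, Eta]" 1 "[Kappa]" "wpow [Delta, Eta] m @ [Delta]" c]
      binomial[of Beta Delta Kappa Lam 1 c 1 "[]" "Eta # wpow [Delta, Eta] m @ [Delta]"]
      binomial[of Gamma Kappa Delta Eta "c - 1" c 1 "[Beta]" "[]"]
    by (simp add: rules)
  moreover have "pathel (3, [Lam, Beta, Gamma]) \<in> (relI c :: 'k kq set)"
    using monomial[of "[Delta, Eta, Gamma]" 3 "wpow [Eta, Delta] m @ [Eta]" "[]" c]
      binomial[of Lam Beta Eta Delta "c - 1" c 3 "[]" "[Gamma]"]
    by (simp add: binomial_rules_def m wpow_Suc_right)
  moreover have "pathel (1, [Kappa, Lam, Beta]) \<in> (relI c :: 'k kq set)"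
    using monomial[of "[Gamma, Beta, Delta]" 1 "[Beta]" "wpow [Eta, Delta] m @ [Eta]" c]
      binomial[of Kappa Eta Beta Gamma 1 c 1 "[]" "Delta # wpow [Eta, Delta] m @ [Eta]"]
      binomial[of Lam Beta Eta Delta "c - 1" c 1 "[Kappa]" "[]"]
    by (simp add: rules)
  moreover have "pathel (2, [Gamma, Kappa, Lam]) \<in> (relI c :: 'k kq set)"
    using monomial[of "[Delta, Eta, Gamma]" 2 "wpow [Delta, Eta] m" "[Beta, Gamma]" c]
      binomial[of Delta Lam Gamma Beta 1 c 2 "wpow [Delta, Eta] m @ [Delta, Eta]" "[]"]
      binomial[of Gamma Kappa Delta Eta "c - 1" c 2 "[]" "[Lam]"]
    by (simp add: binomial_rules_def m wpow_Suc_right)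
  moreover have "pathel (2, [Delta, Lam, Kappa]) \<in> (relI c :: 'k kq set)"
    using monomial[of "[Gamma, Beta, Delta]" 2 "[]" "Eta # wpow [Delta, Eta] m @ [Delta]" c]
      binomial[of Gamma Kappa Delta Eta "c - 1" c 2 "[Gamma, Beta]" "[]"]
      binomial[of Delta Lam Gamma Beta 1 c 2 "[]" "[Kappa]"]
    by (simp add: rules)
  moreover have "pathel (3, [Lam, Kappa, Eta]) \<in> (relI c :: 'k kq set)"
    using monomial[of "[Lam, Kappa, Eta]" 3 "[]" "[]" c] by simp
  moreover have "pathel (1, [Beta, Delta, Eta]) \<in> (relI c :: 'k kq set)"
    using monomial[of "[Lam, Kappa, Eta]" 1 "[Kappa]" "[]" c]
      binomial[of Beta Delta Kappa Lam 1 c 1 "[]" "[Eta]"]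
    by (simp add: rules)
  moreover have "pathel (2, [Delta, Eta, Gamma]) \<in> (relI c :: 'k kq set)"
    using monomial[of "[Delta, Eta, Gamma]" 2 "[]" "[]" c] by simp
  moreover have "pathel (1, [Kappa, Eta, Delta]) \<in> (relI c :: 'k kq set)"
    using monomial[of "[Gamma, Beta, Delta]" 1 "[Beta]" "[]" c]
      binomial[of Kappa Eta Beta Gamma 1 c 1 "[]" "[Delta]"]
    by (simp add: rules)
  moreover have "pathel (3, [Eta, Delta, Lam]) \<in> (relI c :: 'k kq set)"
    using monomial[of "[Lam, Kappa, Eta]" 3 "[]" "Delta # wpow [Eta, Delta] m @ [Eta, Gamma]" c]
      binomial[of Lam Beta Eta Delta "c - 1" c 3 "[Lam, Kappa]" "[Gamma]"]
      binomial[of Eta Gamma Lam Kappa 1 c 3 "[]" "[Beta, Gamma]"]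
      binomial[of Delta Lam Gamma Beta 1 c 3 "[Eta]" "[]"]
    by (simp add: rules)
  ultimately show ?thesis
    using assms(2) unfolding commutator_paths_def by auto
qed

section \<open>Closed paths lie in the corner of the centre\<close>

definition cycle_sum :: "arrow \<Rightarrow> arrow \<Rightarrow> 'k::field kq" where
  "cycle_sum x y = pathel (src x, [x, y]) \<oplus>\<^sub>Q pathel (src y, [y, x])"

lemma central_cycle_sum:
  assumes "2 \<le> c" and cycle: "(x, y) \<in> two_cycles"
  shows "central_mod (relI c) (cycle_sum x y :: 'k::field kq)"
  unfolding relI_def
proof (rule central_mod_if_commutes_with_generators)
  show "(cycle_sum x y :: 'k kq) \<in> kQ"
    using cycle unfolding cycle_sum_def two_cycles_def by (auto intro!: kq_add_in_kQ pathel_in_kQ)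
  show "(cycle_sum x y :: 'k kq) \<otimes>\<^sub>Q idem j \<ominus>\<^sub>Q idem j \<otimes>\<^sub>Q cycle_sum x y \<in> gen_ideal (relations c)"
    if "j \<in> {1,2,3}" for j
    using that cycle
    by (cases x; cases y) (auto simp: two_cycles_def cycle_sum_def kq_mult_add_left kq_mult_add_right
        idem_def gen_ideal.zero)
  show "(cycle_sum x y :: 'k kq) \<otimes>\<^sub>Q pathel (src a, [a]) \<ominus>\<^sub>Q pathel (src a, [a]) \<otimes>\<^sub>Q cycle_sum x y
      \<in> gen_ideal (relations c)" for a
    using cycle unfolding two_cycles_def
    by (elim insertE emptyE; cases a) (simp_all add: cycle_sum_def kq_mult_add_left
        kq_mult_add_right gen_ideal.zero gen_ideal_neg commutator_paths_def
        commutator_path_in_relI[OF assms(1), unfolded relI_def])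
qed

lemma two_cycle_in_center_corner:
  assumes "2 \<le> c" and cycle: "(x, y) \<in> two_cycles"
  shows "pathel (src x, [x, y]) \<in> center_corner_pre (relI c :: 'k::field kq set) (src x)"
proof -
  have "idem (src x) \<otimes>\<^sub>Q cycle_sum x y \<otimes>\<^sub>Q idem (src x) \<in> center_corner_pre (relI c :: 'k kq set) (src x)"
    using central_cycle_sum[OF assms] src_in_vertices unfolding relI_def by (rule center_corner_pre_sandwich)
  moreover have "idem (src x) \<otimes>\<^sub>Q cycle_sum x y \<otimes>\<^sub>Q idem (src x) = (pathel (src x, [x, y]) :: 'k kq)"
    using cycle unfolding two_cycles_def
    by (auto simp: cycle_sum_def kq_mult_add_left kq_mult_add_right idem_def)
  ultimately show ?thesis by simp
qed

lemma two_cycle_power_in_center_corner: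
  assumes "2 \<le> c" and cycle: "(x, y) \<in> two_cycles"
  shows "pathel (src x, wpow [x, y] k) \<in> center_corner_pre (relI c :: 'k::field kq set) (src x)"
proof (induction k)
  case 0
  show ?case
    using center_corner_pre_idem[OF src_in_vertices] by (simp add: idem_def relI_def)
next
  case (Suc k)
  then show ?case
    using two_cycle_in_center_corner[OF assms] two_cycle_closed[OF cycle] src_in_vertices
    unfolding relI_def wpow_Suc by (intro center_corner_pre_append) auto
qed

lemma two_cycle_prefix_in_center_corner:
  assumes "2 \<le> c" and cycle: "(a, b) \<in> two_cycles"
    and rest: "pathel (src a, rest) \<in> center_corner_pre (relI c :: 'k::field kq set) (src a)"
  shows "pathel (src a, a # b # rest) \<in> center_corner_pre (relI c :: 'k kq set) (src a)"
  using center_corner_pre_append[of "src a" "[a, b]" "relations c" rest]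
    two_cycle_in_center_corner[OF assms(1,2)] rest two_cycle_closed[OF cycle] src_in_vertices
  by (simp add: relI_def)

lemma binomial_rewrite_in_center_corner:
  assumes "2 \<le> c" and rule: "(a, b, x, y, k) \<in> binomial_rules c"
    and valid: "valid_path i (a # b # rest)"
    and tail: "pathel (i, x # rest) \<in> center_corner_pre (relI c :: 'k::field kq set) i"
  shows "pathel (i, a # b # rest) \<in> center_corner_pre (relI c :: 'k kq set) i"
proof -
  have x: "(x, y) \<in> two_cycles" "src x = i"
    using binomial_rule_shape[OF rule] valid by auto
  have i: "i \<in> {1,2,3}"
    using valid valid_path_vertex by blast
  have "pathel (i, wpow [x, y] k) \<in> center_corner_pre (relI c :: 'k kq set) i"
    using two_cycle_power_in_center_corner[OF assms(1) x(1)] x(2) by simp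
  then have "pathel (i, wpow [x, y] k @ x # rest) \<in> center_corner_pre (relI c :: 'k kq set) i"
    using center_corner_pre_append[of i "wpow [x, y] k" "relations c" "x # rest"]
      tail two_cycle_closed[OF x(1)] x(2) i
    by (simp add: relI_def)
  moreover have "pathel (i, a # b # rest) \<ominus>\<^sub>Q pathel (i, wpow [x, y] k @ x # rest) \<in> (relI c :: 'k kq set)"
    using relI_binomial[OF rule, of i "[]" rest] valid by simp
  moreover have "(pathel (i, a # b # rest) :: 'k kq) \<in> kQ"
    using valid by (rule pathel_in_kQ)
  ultimately show ?thesis
    unfolding relI_def by (rule center_corner_pre_cong)
qed

lemma closed_path_in_center_corner:
  assumes "2 \<le> c"
  shows "valid_path i xs \<Longrightarrow> endv i xs = i \<Longrightarrow> pathel (i, xs) \<in> center_corner_pre (relI c :: 'k::field kq set) i"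
proof (induction xs rule: length_induct)
  case (1 xs)
  have IH: "pathel (i, ys) \<in> center_corner_pre (relI c :: 'k kq set) i"
    if "length ys < length xs" "valid_path i ys" "endv i ys = i" for ys
    using "1.IH" that by blast
  consider "xs = []" | a where "xs = [a]" | a b rest where "xs = a # b # rest"
    by (metis list.exhaust)
  then show ?case
  proof cases
    case 1
    then show ?thesis
      using center_corner_pre_idem "1.prems" valid_path_vertex by (simp add: idem_def relI_def)
  next
    case (2 a)
    then show ?thesis using "1.prems" by (cases a) auto
  next
    case (3 a b rest)
    have valid: "valid_path i (a # b # rest)" and a: "src a = i"
      and rest: "valid_path (tgt b) rest" "endv (tgt b) rest = i"
      using "1.prems" 3 by auto
    show ?thesis
    proof (cases "(a, b) \<in> two_cycles")
      case True
      then have "tgt b = i" using a unfolding two_cycles_def by auto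
      then have "pathel (i, rest) \<in> center_corner_pre (relI c :: 'k kq set) i"
        using rest 3 by (intro IH) simp_all
      then show ?thesis
        using two_cycle_prefix_in_center_corner[OF assms True] a 3 by simp
    next
      case False
      then obtain x y k where rule: "(a, b, x, y, k) \<in> binomial_rules c"
        using binomial_rule_exists[OF valid] by blast
      then have "src x = i" "tgt x = tgt b"
        using binomial_rule_shape a by auto
      then have "pathel (i, x # rest) \<in> center_corner_pre (relI c :: 'k kq set) i"
        using rest 3 by (intro IH) simp_all
      then show ?thesis
        using binomial_rewrite_in_center_corner[OF assms rule valid] 3 by simp
    qed
  qed
qed

lemma corner_in_center_corner:
  assumes "2 \<le> c" and i: "i \<in> {1,2,3}" and "a \<in> kQ"
  shows "idem i \<otimes>\<^sub>Q a \<otimes>\<^sub>Q idem i \<in> center_corner_pre (relI c :: 'k::field kq set) i"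
  using \<open>a \<in> kQ\<close>
proof (induction rule: kQ_induct)
  case zero
  then show ?case by (simp add: center_corner_pre_zero relI_def)
next
  case (step y d j xs)
  have "idem i \<otimes>\<^sub>Q pathel (j, xs) \<otimes>\<^sub>Q idem i =
      (if j = i \<and> endv i xs = i then pathel (i, xs) else kq_zero :: 'k kq)"
    by (auto simp: idem_def)
  then have path: "idem i \<otimes>\<^sub>Q pathel (j, xs) \<otimes>\<^sub>Q idem i \<in> center_corner_pre (relI c :: 'k kq set) i"
    using closed_path_in_center_corner[OF assms(1)] step.hyps center_corner_pre_zero
    by (auto simp: relI_def)
  have "idem i \<otimes>\<^sub>Q (y \<oplus>\<^sub>Q kq_smult d (pathel (j, xs))) \<otimes>\<^sub>Q idem i =
      (idem i \<otimes>\<^sub>Q y \<otimes>\<^sub>Q idem i) \<oplus>\<^sub>Q kq_smult d (idem i \<otimes>\<^sub>Q pathel (j, xs) \<otimes>\<^sub>Q idem i)"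
    by (simp only: kq_mult_add_left kq_mult_add_right kq_mult_smult_left kq_mult_smult_right)
  then show ?case
    using step.IH path unfolding relI_def
    by (simp only:) (intro center_corner_pre_add center_corner_pre_smult)
qed

theorem proposition2p4:
  fixes n :: nat and c :: nat and i :: nat
  assumes "CHAR('k::alg_closed_field) = 2"
    and "n \<ge> 3" and "c = 2 ^ (n - 2)"
    and "i \<in> {1, 2, 3}"
  shows "corner_pre (relI c :: 'k kq set) i = center_corner_pre (relI c) i"
proof
  have "(2::nat) ^ 1 \<le> 2 ^ (n - 2)"
    using assms(2) by (intro power_increasing) auto
  then have c: "2 \<le> c" using assms(3) by simp
  show "corner_pre (relI c :: 'k kq set) i \<subseteq> center_corner_pre (relI c) i"
  proof
    fix x :: "'k kq"
    assume "x \<in> corner_pre (relI c) i"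
    then obtain a where x: "x \<in> kQ" and a: "a \<in> kQ"
      and diff: "x \<ominus>\<^sub>Q (idem i \<otimes>\<^sub>Q a \<otimes>\<^sub>Q idem i) \<in> relI c"
      unfolding corner_pre_def by blast
    from corner_in_center_corner[OF c assms(4) a] diff x show "x \<in> center_corner_pre (relI c) i"
      unfolding relI_def by (rule center_corner_pre_cong)
  qed
  show "center_corner_pre (relI c :: 'k kq set) i \<subseteq> corner_pre (relI c) i"
    unfolding center_corner_pre_def corner_pre_def central_mod_def by blast
qed


end
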